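(* Let $f:\mathbb{R}^D\to\mathbb{R}$ be differentiable, $L$-smooth, and bounded: $f_{\mathrm{inf}}\le f(\theta)\le f_{\mathrm{sup}}$ for all $\theta$, with $f_{\mathrm{inf}},f_{\mathrm{sup}}$ finite. Fix $\beta_1,\beta_2\in[0,1)$, $\epsilon>0$, a deterministic $\theta_0\in\mathbb{R}^D$, and learning rates $\alpha_t$ with $a_1/\sqrt{t}\le\alpha_t\le a_2/\sqrt{t}$ for all $t\ge1$, for constants $0<a_1\le a_2$ (i.e. $\alpha_t=\Theta(1/\sqrt t)$). Run ADOPT: $v_0=g_0\odot g_0$, $m_1=g_1/\max\{\sqrt{v_0},\epsilon\}$, and for $t\ge1$: $$\theta_t=\theta_{t-1}-\alpha_t m_t,\quad v_t=\beta_2 v_{t-1}+(1-\beta_2)g_t\odot g_t,\quad m_{t+1}=\beta_1 m_t+(1-\beta_1)\frac{g_{t+1}}{\max\{\sqrt{v_t},\epsilon\}},$$ where $g_0$ is a random vector with $\mathbb{E}\|g_0\|^2\le G^2$ and, for $t\ge1$, $\mathbb{E}[g_t\mid g_0,\dots,g_{t-1}]=\nabla f(\theta_{t-1})$ and $\mathbb{E}\|g_t\|^2\le G^2$ ($G>0$ a constant). Then there is a constant $K$ independent of $T$ such that for all $T\ge1$, $$\min_{t=1,\dots,T}\Big\{\mathbb{E}\big[\|\nabla f(\theta_{t-1})\|^{4/3}\big]^{3/2}\Big\}\le K/\sqrt{T}.$$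
   Context: $L$-smooth means $\|\nabla f(x)-\nabla f(y)\|\le L\|x-y\|$ for all $x,y$, with $L>0$. Norms are Euclidean; $\odot$, square root, division and $\max\{\cdot,\epsilon\}$ act elementwise. *)

theory Defs
  imports "HOL-Analysis.Analysis" "HOL-Probability.Probability"
begin

text \<open>One ADOPT step quantities. adopt_state ... n = (theta_n, v_n, m_(n+1)),
  computed deterministically from theta_0 and the sample sequence gs.\<close>

definition emax_sqrt_div :: "real \<Rightarrow> real^'d \<Rightarrow> real^'d \<Rightarrow> real^'d" where
  "emax_sqrt_div eps g v = (\<chi> i. g $ i / max (sqrt (v $ i)) eps)"

fun adopt_state ::
  "real \<Rightarrow> real \<Rightarrow> real \<Rightarrow> (nat \<Rightarrow> real) \<Rightarrow> real^'d \<Rightarrow> (nat \<Rightarrow> real^'d) \<Rightarrow> nat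
     \<Rightarrow> (real^'d) \<times> (real^'d) \<times> (real^'d)" where
  "adopt_state beta1 beta2 eps alpha theta0 gs 0 =
     (let v0 = (\<chi> i. gs 0 $ i * gs 0 $ i)
      in (theta0, v0, emax_sqrt_div eps (gs 1) v0))"
| "adopt_state beta1 beta2 eps alpha theta0 gs (Suc n) =
     (case adopt_state beta1 beta2 eps alpha theta0 gs n of (theta, v, m) \<Rightarrow>
       let theta' = theta - alpha (Suc n) *\<^sub>R m;
           v' = (\<chi> i. beta2 * v $ i + (1 - beta2) * (gs (Suc n) $ i * gs (Suc n) $ i));
           m' = beta1 *\<^sub>R m + (1 - beta1) *\<^sub>R emax_sqrt_div eps (gs (Suc (Suc n))) v'
       in (theta', v', m'))"

definition adopt_theta ::
  "real \<Rightarrow> real \<Rightarrow> real \<Rightarrow> (nat \<Rightarrow> real) \<Rightarrow> real^'d \<Rightarrow> (nat \<Rightarrow> real^'d) \<Rightarrow> nat \<Rightarrow> real^'d" where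
  "adopt_theta beta1 beta2 eps alpha theta0 gs n = fst (adopt_state beta1 beta2 eps alpha theta0 gs n)"

definition gen_filtration :: "'a measure \<Rightarrow> (nat \<Rightarrow> 'a \<Rightarrow> real^'d) \<Rightarrow> nat \<Rightarrow> 'a measure" where
  "gen_filtration M g t =
     sigma (space M) {g i -` B \<inter> space M | i B. i < t \<and> B \<in> sets borel}"

end

theory Submission
  imports Defs
begin

text \<open>
  Let p_t = E[df theta_t \<bullet> m_t] and let q_t be the expectation of the squared gradient
  preconditioned by max (sqrt v_t) eps. The descent lemma for L-smooth f gives
  E f theta_(t+1) \<le> E f theta_t - alpha_(t+1) p_t + L/2 alpha_(t+1)^2 E |m_t|^2, and since v_t is
  determined by g_0, ..., g_t, unbiasedness of g_(t+1) turns the momentum update into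
  p_(t+1) \<ge> beta1 p_t - beta1 L alpha_(t+1) E |m_t|^2 + (1 - beta1) q_(t+1).
  Everything here is bounded: |df| \<le> sqrt (2 L (f_sup - f_inf)) because f is bounded, and
  E |m_t|^2 \<le> G^2 / eps^2. Summing the descent inequality over T/2 \<le> t < T, where all step sizes
  are comparable to 1 / sqrt T, shows that some q_t in this window is O(1 / sqrt T). Finally,
  q_t dominates E[|df theta_t|^2 / sqrt (sum v_t + eps^2)], and Young's inequality together with
  E (sum v_t) \<le> G^2 converts this into E |df theta_t|^(4/3) = O(T^(-1/3)).
\<close>

lemma borel_measurable_vec_nth [measurable]:
  fixes h :: "'a \<Rightarrow> real^'d"
  assumes "h \<in> borel_measurable N"
  shows "(\<lambda>x. h x $ i) \<in> borel_measurable N"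
proof -
  have "(\<lambda>x. h x \<bullet> axis i 1) \<in> borel_measurable N"
    using assms by measurable
  then show ?thesis by (simp add: inner_axis)
qed

lemma borel_measurable_vec_componentwise:
  fixes h :: "'a \<Rightarrow> real^'d"
  assumes "\<And>i. (\<lambda>x. h x $ i) \<in> borel_measurable N"
  shows "h \<in> borel_measurable N"
proof (subst borel_measurable_euclidean_space, intro ballI)
  fix b :: "real^'d" assume "b \<in> Basis"
  then obtain i where "b = axis i 1" by (auto simp: Basis_vec_def)
  then show "(\<lambda>x. h x \<bullet> b) \<in> borel_measurable N" using assms[of i] by (simp add: inner_axis)
qed

lemma emax_sqrt_div_measurable [measurable]:
  fixes h w :: "'a \<Rightarrow> real^'d"
  assumes "h \<in> borel_measurable N" "w \<in> borel_measurable N"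
  shows "(\<lambda>x. emax_sqrt_div e (h x) (w x)) \<in> borel_measurable N"
  unfolding emax_sqrt_div_def using assms by (intro borel_measurable_vec_componentwise) simp

lemma norm_emax_sqrt_div_le:
  assumes "0 < e"
  shows "norm (emax_sqrt_div e u w) \<le> norm u / e"
proof -
  have "norm (emax_sqrt_div e u w) \<le> norm ((1 / e) *\<^sub>R u)"
  proof (rule norm_le_componentwise_cart)
    fix i
    have "\<bar>u $ i\<bar> / max (sqrt (w $ i)) e \<le> \<bar>u $ i\<bar> / e"
      using assms by (intro divide_left_mono) auto
    then show "norm (emax_sqrt_div e u w $ i) \<le> norm (((1 / e) *\<^sub>R u) $ i)"
      using assms by (simp add: emax_sqrt_div_def abs_div)
  qed
  then show ?thesis using assms by simp
qed

lemma norm_sq_vec_sum: "(norm a)\<^sup>2 = (\<Sum>i\<in>UNIV. (a $ i)\<^sup>2)" for a :: "real^'d"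
  unfolding power2_norm_eq_inner inner_vec_def by (simp add: power2_eq_square)

lemma inner_emax_sqrt_div_commute: "a \<bullet> emax_sqrt_div e u w = emax_sqrt_div e a w \<bullet> u"
  by (simp add: emax_sqrt_div_def inner_vec_def mult.commute)

text \<open>The coordinatewise denominators max (sqrt w_i) e are all dominated by sqrt (sum w + e^2).\<close>
lemma inner_emax_sqrt_div_self_lower:
  assumes "0 < e" "\<And>i. 0 \<le> w $ i"
  shows "(norm a)\<^sup>2 / sqrt (sum (($) w) UNIV + e\<^sup>2) \<le> a \<bullet> emax_sqrt_div e a w"
proof -
  define s where "s = sqrt (sum (($) w) UNIV + e\<^sup>2)"
  have w_le_sum: "w $ i \<le> sum (($) w) UNIV" for i
    using assms(2) by (intro member_le_sum) auto
  have denom_le: "max (sqrt (w $ i)) e \<le> s" for i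
  proof -
    have "0 \<le> sum (($) w) UNIV" using assms(2) by (simp add: sum_nonneg)
    then have "sqrt (w $ i) \<le> s" "sqrt (e\<^sup>2) \<le> s"
      unfolding s_def using w_le_sum[of i] by (auto intro!: real_sqrt_le_mono add_increasing2 simp del: real_sqrt_abs)
    then show ?thesis using assms(1) by simp
  qed
  have "(norm a)\<^sup>2 / s = (\<Sum>i\<in>UNIV. (a $ i)\<^sup>2 / s)"
    by (simp add: norm_sq_vec_sum sum_divide_distrib)
  also have "\<dots> \<le> a \<bullet> emax_sqrt_div e a w"
    unfolding inner_vec_def
  proof (intro sum_mono)
    fix i
    show "(a $ i)\<^sup>2 / s \<le> a $ i \<bullet> emax_sqrt_div e a w $ i"
      using assms(1) denom_le[of i]
      by (simp add: emax_sqrt_div_def power2_eq_square divide_left_mono)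
  qed
  finally show ?thesis unfolding s_def .
qed

lemma smooth_quadratic_upper_bound:
  fixes f :: "'v::real_inner \<Rightarrow> real"
  assumes grad: "\<And>x. GDERIV f x :> df x"
    and smooth: "\<And>x y. norm (df x - df y) \<le> L * norm (x - y)"
  shows "f y \<le> f x + df x \<bullet> (y - x) + L / 2 * (norm (y - x))\<^sup>2"
proof -
  define h where "h = y - x"
  define \<phi> where "\<phi> s = f (x + s *\<^sub>R h) - s * (df x \<bullet> h) - L / 2 * s\<^sup>2 * (norm h)\<^sup>2" for s :: real
  have \<phi>_deriv: "DERIV \<phi> s :> (df (x + s *\<^sub>R h) - df x) \<bullet> h - L * s * (norm h)\<^sup>2" for s
  proof -
    have "((\<lambda>t. x + t *\<^sub>R h) has_derivative (\<lambda>t. t *\<^sub>R h)) (at s)"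
      by (auto intro!: derivative_eq_intros)
    then have "((\<lambda>t. f (x + t *\<^sub>R h)) has_derivative (\<lambda>t. (t *\<^sub>R h) \<bullet> df (x + s *\<^sub>R h))) (at s)"
      using has_derivative_compose grad[of "x + s *\<^sub>R h"] unfolding gderiv_def by blast
    then have "DERIV (\<lambda>t. f (x + t *\<^sub>R h)) s :> h \<bullet> df (x + s *\<^sub>R h)"
      by (rule has_derivative_imp_has_field_derivative) (simp add: algebra_simps)
    then show ?thesis unfolding \<phi>_def
      by (auto intro!: derivative_eq_intros simp: inner_commute inner_diff_right)
  qed
  have "\<phi> 1 \<le> \<phi> 0"
  proof (rule DERIV_nonpos_imp_nonincreasing[of 0 1])
    fix s :: real assume s: "0 \<le> s" "s \<le> 1"
    have "(df (x + s *\<^sub>R h) - df x) \<bullet> h \<le> norm (df (x + s *\<^sub>R h) - df x) * norm h"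
      by (rule norm_cauchy_schwarz)
    also have "\<dots> \<le> L * norm (s *\<^sub>R h) * norm h"
      using smooth[of "x + s *\<^sub>R h" x] by (intro mult_right_mono) auto
    also have "\<dots> = L * s * (norm h)\<^sup>2" using s by (simp add: power2_eq_square)
    finally show "\<exists>y. DERIV \<phi> s :> y \<and> y \<le> 0" using \<phi>_deriv[of s] by auto
  qed simp
  then show ?thesis unfolding \<phi>_def h_def by (simp add: algebra_simps)
qed

text \<open>Take one gradient step of length 1/L from x: the decrease norm (df x)^2/(2L)
  guaranteed by the quadratic upper bound cannot exceed the oscillation of f.\<close>
lemma smooth_bounded_gradient_bound:
  fixes f :: "'v::real_inner \<Rightarrow> real"
  assumes grad: "\<And>x. GDERIV f x :> df x"
    and smooth: "\<And>x y. norm (df x - df y) \<le> L * norm (x - y)"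
    and L: "0 < L"
    and bounded: "\<And>x. f_inf \<le> f x \<and> f x \<le> f_sup"
  shows "norm (df x) \<le> sqrt (2 * L * (f_sup - f_inf))"
proof -
  define y where "y = x - (1 / L) *\<^sub>R df x"
  have "f y \<le> f x + df x \<bullet> (y - x) + L / 2 * (norm (y - x))\<^sup>2"
    by (rule smooth_quadratic_upper_bound[OF grad smooth])
  also have "\<dots> = f x - (norm (df x))\<^sup>2 / (2 * L)"
    using L by (simp add: y_def inner_diff_right power2_eq_square field_simps flip: power2_norm_eq_inner)
  finally have "(norm (df x))\<^sup>2 \<le> 2 * L * (f x - f y)"
    using L by (simp add: field_simps)
  also have "\<dots> \<le> 2 * L * (f_sup - f_inf)"
    using L bounded[of x] bounded[of y] by (intro mult_left_mono) auto
  finally show ?thesis by (rule real_le_rsqrt)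
qed

lemma norm_convex_comb_sq_le:
  fixes a b :: "'v::real_normed_vector"
  assumes "0 \<le> c" "c \<le> 1"
  shows "(norm (c *\<^sub>R a + (1 - c) *\<^sub>R b))\<^sup>2 \<le> c * (norm a)\<^sup>2 + (1 - c) * (norm b)\<^sup>2"
proof -
  have "norm (c *\<^sub>R a + (1 - c) *\<^sub>R b) \<le> c * norm a + (1 - c) * norm b"
    using assms norm_triangle_ineq[of "c *\<^sub>R a" "(1 - c) *\<^sub>R b"] by simp
  then have "(norm (c *\<^sub>R a + (1 - c) *\<^sub>R b))\<^sup>2 \<le> (c * norm a + (1 - c) * norm b)\<^sup>2"
    by (intro power_mono) auto
  also have "\<dots> = c * (norm a)\<^sup>2 + (1 - c) * (norm b)\<^sup>2 - c * (1 - c) * (norm a - norm b)\<^sup>2"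
    by (simp add: power2_eq_square algebra_simps)
  also have "\<dots> \<le> c * (norm a)\<^sup>2 + (1 - c) * (norm b)\<^sup>2"
    using assms by simp
  finally show ?thesis .
qed

lemma lipschitz_gradient_inner_step:
  fixes df :: "'v::real_inner \<Rightarrow> 'v"
  assumes smooth: "\<And>x y. norm (df x - df y) \<le> L * norm (x - y)" and "0 \<le> a"
  shows "df x \<bullet> m - L * a * (norm m)\<^sup>2 \<le> df (x - a *\<^sub>R m) \<bullet> m"
proof -
  have "(df x - df (x - a *\<^sub>R m)) \<bullet> m \<le> norm (df x - df (x - a *\<^sub>R m)) * norm m"
    by (rule norm_cauchy_schwarz)
  also have "\<dots> \<le> L * norm (a *\<^sub>R m) * norm m"
    using smooth[of x "x - a *\<^sub>R m"] by (intro mult_right_mono) auto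
  also have "\<dots> = L * a * (norm m)\<^sup>2"
    using \<open>0 \<le> a\<close> by (simp add: power2_eq_square)
  finally show ?thesis by (simp add: inner_diff_left)
qed

lemma powr_four_thirds_young:
  fixes X s l :: real
  assumes "0 \<le> X" "0 < s" "0 < l"
  shows "X powr (4/3) \<le> 2/3 * (l * X\<^sup>2 / s) + s\<^sup>2 / (3 * l\<^sup>2)"
proof (cases "X = 0")
  case True
  then show ?thesis using assms by simp
next
  case False
  then have X: "0 < X" using assms by simp
  define a where "a = l * X\<^sup>2 / s"
  define b where "b = s\<^sup>2 / l\<^sup>2"
  have a: "0 < a" and b: "0 < b" using X assms by (auto simp: a_def b_def)
  have "X ^ 4 = X powr 4" "a\<^sup>2 = a powr 2" using X a by simp_all
  then have "X powr (4/3) = (X ^ 4) powr (1/3)" "(a\<^sup>2 * b) powr (1/3) = a powr (2/3) * b powr (1/3)"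
    using a b by (simp_all add: powr_mult powr_powr del: powr_numeral)
  moreover have "X ^ 4 = a\<^sup>2 * b"
    using assms unfolding a_def b_def by (simp add: power_divide power_mult_distrib flip: power_mult)
  ultimately have "X powr (4/3) = a powr (2/3) * b powr (1/3)" by simp
  also have "\<dots> \<le> 2/3 * a + 1/3 * b"
    using a b by (intro Youngs_inequality_0) auto
  finally show ?thesis unfolding a_def b_def by simp
qed

text \<open>The choice l = T^(1/6) makes both terms of the Young-type bound O(T^(-1/3)).\<close>
lemma powr_three_halves_rate:
  fixes E q C S T :: real
  assumes T: "0 < T" and E: "0 \<le> E" and q: "q \<le> C / sqrt T"
    and young: "\<And>l. 0 < l \<Longrightarrow> E \<le> 2/3 * l * q + S / (3 * l\<^sup>2)"
  shows "E powr (3/2) \<le> (2/3 * C + S / 3) powr (3/2) / sqrt T"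
proof -
  define l where "l = T powr (1/6)"
  define K where "K = 2/3 * C + S / 3"
  have l: "0 < l" using T by (simp add: l_def)
  have l_pow: "l ^ 3 = l powr 3" "l\<^sup>2 = l powr 2" using l by simp_all
  have l_cube: "l ^ 3 = sqrt T"
    using T unfolding l_pow by (simp add: l_def powr_powr powr_half_sqrt del: powr_numeral)
  have "2/3 * l * q \<le> 2/3 * l * (C / l ^ 3)"
    using q l unfolding l_cube by (intro mult_left_mono) auto
  then have "E \<le> 2/3 * l * (C / l ^ 3) + S / (3 * l\<^sup>2)"
    using young[OF l] by linarith
  also have "\<dots> = K / l\<^sup>2"
    using l by (simp add: K_def add_divide_distrib power2_eq_square power3_eq_cube)
  finally have E_le: "E \<le> K / l\<^sup>2" .
  then have "0 \<le> K / l\<^sup>2" using E by linarith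
  then have "0 \<le> K" using l by (simp add: zero_le_divide_iff)
  have "E powr (3/2) \<le> (K / l\<^sup>2) powr (3/2)"
    using E E_le by (intro powr_mono2) auto
  also have "\<dots> = K powr (3/2) / l ^ 3"
    using l \<open>0 \<le> K\<close> unfolding l_pow by (simp add: powr_divide powr_powr del: powr_numeral)
  finally show ?thesis unfolding K_def l_cube .
qed

lemma sum_power_diff_le:
  fixes \<beta> :: real
  assumes "0 \<le> \<beta>" "\<beta> < 1"
  shows "(\<Sum>n\<in>{A..<T}. \<beta> ^ (n - A)) \<le> 1 / (1 - \<beta>)"
proof -
  have "(\<Sum>n\<in>{A..<T}. \<beta> ^ (n - A)) = (\<Sum>i<T - A. \<beta> ^ i)"
    by (simp add: sum.atLeastLessThan_shift_0[of _ A T] atLeast0LessThan)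
  also have "\<dots> = (1 - \<beta> ^ (T - A)) / (1 - \<beta>)"
    using assms by (simp add: sum_gp_strict)
  also have "\<dots> \<le> 1 / (1 - \<beta>)"
    using assms by (intro divide_right_mono) auto
  finally show ?thesis .
qed

text \<open>Unrolling the recursion from N: the initial value decays geometrically and the losses e
  accumulate to at most e / (1 - beta).\<close>
lemma momentum_recursion_lower_bound:
  fixes p q :: "nat \<Rightarrow> real"
  assumes \<beta>: "0 \<le> \<beta>" "\<beta> < 1" and e: "0 \<le> e"
    and q_nonneg: "\<And>n. 0 \<le> q n"
    and start: "- P \<le> p N"
    and recursion: "\<And>k. N \<le> k \<Longrightarrow> \<beta> * p k - e + (1 - \<beta>) * q (Suc k) \<le> p (Suc k)"
    and "N < n"
  shows "(1 - \<beta>) * q n - \<beta> ^ (n - N) * P - e / (1 - \<beta>) \<le> p n"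
  using \<open>N < n\<close>
proof (induction n)
  case 0
  then show ?case by simp
next
  case (Suc k)
  have e_le: "e \<le> e / (1 - \<beta>)" and e_sum: "\<beta> * (e / (1 - \<beta>)) + e = e / (1 - \<beta>)"
    using \<beta> e by (simp_all add: field_simps)
  have "\<beta> * (- (\<beta> ^ (k - N) * P) - e / (1 - \<beta>)) \<le> \<beta> * p k" if "N < k"
  proof -
    have "- (\<beta> ^ (k - N) * P) - e / (1 - \<beta>) \<le> (1 - \<beta>) * q k - (\<beta> ^ (k - N) * P) - e / (1 - \<beta>)"
      using \<beta> q_nonneg[of k] by simp
    also have "\<dots> \<le> p k" using Suc.IH that by blast
    finally show ?thesis using \<beta> by (intro mult_left_mono) auto
  qed
  moreover have "Suc k - N = Suc (k - N)" using Suc.prems by simp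
  moreover have "\<beta> * (- P) \<le> \<beta> * p k" if "k = N"
    using start that \<beta> by (intro mult_left_mono) auto
  ultimately show ?case
    using recursion[of k] Suc.prems e_le e_sum by (cases "k = N") (auto simp: algebra_simps)
qed

lemma exists_le_mean:
  fixes f :: "'a \<Rightarrow> real"
  assumes "finite W" "W \<noteq> {}"
  shows "\<exists>n\<in>W. real (card W) * f n \<le> sum f W"
proof -
  obtain n where "n \<in> W" "f n = Min (f ` W)"
    using Min_in[of "f ` W"] assms by fastforce
  then show ?thesis
    using sum_bounded_below[of W "f n" f] assms by (intro bexI[of _ n]) auto
qed

text \<open>Expected quantities of a momentum method with step sizes alpha t of order 1 / sqrt t:
  p is the correlation of gradient and momentum, q the progress measure, r the squared momentum
  and F the loss.\<close>
locale momentum_scheme =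
  fixes p q r F \<alpha> :: "nat \<Rightarrow> real" and \<beta> L R P lo hi a1 a2 :: real
  assumes \<beta>: "0 \<le> \<beta>" "\<beta> < 1" and L: "0 \<le> L" and R: "0 \<le> R"
    and q_nonneg: "\<And>n. 0 \<le> q n"
    and p_bound: "\<And>n. \<bar>p n\<bar> \<le> P"
    and r_bound: "\<And>n. r n \<le> R"
    and F_bound: "\<And>n. lo \<le> F n \<and> F n \<le> hi"
    and descent: "\<And>n. F (Suc n) \<le> F n - \<alpha> (Suc n) * p n + L / 2 * (\<alpha> (Suc n))\<^sup>2 * r n"
    and momentum: "\<And>n. \<beta> * p n - \<beta> * L * \<alpha> (Suc n) * r n + (1 - \<beta>) * q (Suc n) \<le> p (Suc n)"
    and lr: "\<And>t. 1 \<le> t \<Longrightarrow> a1 / sqrt (real t) \<le> \<alpha> t \<and> \<alpha> t \<le> a2 / sqrt (real t)"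
    and a1: "0 < a1"
begin

lemma P_nonneg: "0 \<le> P"
  using p_bound[of 0] by linarith

lemma a2_pos: "0 < a2"
  using lr[of 1] a1 by simp

lemma step_size_window:
  assumes "0 < A" "A \<le> Suc n"
  shows "0 \<le> \<alpha> (Suc n)" "\<alpha> (Suc n) \<le> a2 / sqrt (real A)"
proof -
  have "0 \<le> a1 / sqrt (real (Suc n))" using a1 by simp
  then show "0 \<le> \<alpha> (Suc n)" using lr[of "Suc n"] by linarith
  have "a2 / sqrt (real (Suc n)) \<le> a2 / sqrt (real A)"
    using assms a2_pos by (intro divide_left_mono) auto
  then show "\<alpha> (Suc n) \<le> a2 / sqrt (real A)" using lr[of "Suc n"] by linarith
qed

lemma window_lower_bound:
  assumes "0 < A" "A \<le> n"
  shows "(1 - \<beta>) * q n - \<beta> ^ (n - A) * P - \<beta> * L * (a2 / sqrt (real A)) * R / (1 - \<beta>) \<le> p n"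
proof -
  define amax where "amax = a2 / sqrt (real A)"
  define e where "e = \<beta> * L * amax * R"
  have step_error: "\<beta> * L * \<alpha> (Suc k) * r k \<le> e" if "A - 1 \<le> k" for k
  proof -
    have "\<alpha> (Suc k) * r k \<le> \<alpha> (Suc k) * R"
      using step_size_window[of A k] assms that r_bound[of k] by (intro mult_left_mono) auto
    also have "\<dots> \<le> amax * R"
      using step_size_window[of A k] assms that R by (intro mult_right_mono) (auto simp: amax_def)
    finally show ?thesis
      unfolding e_def using \<beta> L by (simp add: mult.assoc mult_left_mono)
  qed
  have "(1 - \<beta>) * q n - \<beta> ^ (n - (A - 1)) * P - e / (1 - \<beta>) \<le> p n"
  proof (rule momentum_recursion_lower_bound[OF \<beta> _ q_nonneg])
    show "0 \<le> e" using \<beta> L R a2_pos by (simp add: e_def amax_def)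
    show "- P \<le> p (A - 1)" using p_bound[of "A - 1"] by linarith
    show "\<beta> * p k - e + (1 - \<beta>) * q (Suc k) \<le> p (Suc k)" if "A - 1 \<le> k" for k
      using momentum[of k] step_error[OF that] by linarith
  qed (use assms in auto)
  moreover have "\<beta> ^ (n - (A - 1)) * P \<le> \<beta> ^ (n - A) * P"
    using \<beta> assms P_nonneg by (intro mult_right_mono power_decreasing) auto
  ultimately show ?thesis unfolding e_def amax_def by linarith
qed

lemma window_step:
  assumes "0 < A" "A \<le> n" "n < T"
  shows "(1 - \<beta>) * (a1 / sqrt (real T)) * q n - a2 / sqrt (real A) * P * \<beta> ^ (n - A)
      - a2 / sqrt (real A) * (\<beta> * L * (a2 / sqrt (real A)) * R / (1 - \<beta>))
    \<le> F n - F (Suc n) + L / 2 * (a2 / sqrt (real A))\<^sup>2 * R"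
proof -
  define amin where "amin = a1 / sqrt (real T)"
  define amax where "amax = a2 / sqrt (real A)"
  define D where "D = \<beta> * L * amax * R / (1 - \<beta>)"
  define a where "a = \<alpha> (Suc n)"
  have D: "0 \<le> D" using \<beta> L R a2_pos by (simp add: D_def amax_def)
  have a: "0 \<le> a" "a \<le> amax"
    using step_size_window[of A n] assms by (auto simp: a_def amax_def)
  have "a1 / sqrt (real T) \<le> a1 / sqrt (real (Suc n))"
    using assms a1 by (intro divide_left_mono) auto
  then have a_lower: "amin \<le> a" using lr[of "Suc n"] by (simp add: a_def amin_def)
  have "a\<^sup>2 * r n \<le> amax\<^sup>2 * R"
    using r_bound[of n] a R by (intro order_trans[OF mult_left_mono mult_right_mono] power_mono) auto
  then have "L / 2 * a\<^sup>2 * r n \<le> L / 2 * amax\<^sup>2 * R"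
    using L by (simp add: mult.assoc mult_left_mono)
  then have upper: "a * p n \<le> F n - F (Suc n) + L / 2 * amax\<^sup>2 * R"
    using descent[of n] unfolding a_def by linarith
  have "(1 - \<beta>) * q n - (\<beta> ^ (n - A) * P + D) \<le> p n"
    using window_lower_bound[of A n] assms by (simp add: D_def amax_def)
  then have "a * ((1 - \<beta>) * q n) - a * (\<beta> ^ (n - A) * P + D) \<le> a * p n"
    using a(1) by (simp add: mult_left_mono flip: right_diff_distrib)
  moreover have "amin * ((1 - \<beta>) * q n) \<le> a * ((1 - \<beta>) * q n)"
    using a_lower \<beta> q_nonneg[of n] by (intro mult_right_mono) auto
  moreover have "a * (\<beta> ^ (n - A) * P + D) \<le> amax * (\<beta> ^ (n - A) * P + D)"
    using a \<beta> P_nonneg D by (intro mult_right_mono) auto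
  ultimately have "(1 - \<beta>) * amin * q n - amax * P * \<beta> ^ (n - A) - amax * D
      \<le> F n - F (Suc n) + L / 2 * amax\<^sup>2 * R"
    using upper by (simp add: algebra_simps)
  then show ?thesis unfolding amin_def amax_def D_def .
qed

lemma window_bound:
  assumes A: "0 < A" "A \<le> T"
  shows "(1 - \<beta>) * (a1 / sqrt (real T)) * (\<Sum>n\<in>{A..<T}. q n)
    \<le> (hi - lo) + real (T - A) * (a2 / sqrt (real A))\<^sup>2 * L * R * (1/2 + \<beta> / (1 - \<beta>))
       + a2 / sqrt (real A) * P / (1 - \<beta>)"
proof -
  define amin where "amin = a1 / sqrt (real T)"
  define amax where "amax = a2 / sqrt (real A)"
  define D where "D = \<beta> * L * amax * R / (1 - \<beta>)"
  have amax: "0 \<le> amax" using a2_pos by (simp add: amax_def)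
  have "(\<Sum>n\<in>{A..<T}. (1 - \<beta>) * amin * q n - amax * P * \<beta> ^ (n - A) - amax * D)
      \<le> (\<Sum>n\<in>{A..<T}. F n - F (Suc n) + L / 2 * amax\<^sup>2 * R)"
    using window_step[OF A(1)] unfolding amin_def amax_def D_def by (intro sum_mono) auto
  also have "\<dots> = F A - F T + real (T - A) * (L / 2 * amax\<^sup>2 * R)"
    using sum_Suc_diff'[OF \<open>A \<le> T\<close>, of "\<lambda>n. - F n"] by (simp add: sum.distrib)
  finally have "(1 - \<beta>) * amin * (\<Sum>n\<in>{A..<T}. q n)
      - amax * P * (\<Sum>n\<in>{A..<T}. \<beta> ^ (n - A)) - real (T - A) * (amax * D)
      \<le> F A - F T + real (T - A) * (L / 2 * amax\<^sup>2 * R)"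
    by (simp add: sum_subtractf sum_distrib_left)
  moreover have "amax * P * (\<Sum>n\<in>{A..<T}. \<beta> ^ (n - A)) \<le> amax * P / (1 - \<beta>)"
    using mult_left_mono[OF sum_power_diff_le[OF \<beta>], of "amax * P"] amax P_nonneg by simp
  moreover have "F A - F T \<le> hi - lo" using F_bound[of A] F_bound[of T] by simp
  moreover have "real (T - A) * (amax * D) + real (T - A) * (L / 2 * amax\<^sup>2 * R)
      = real (T - A) * amax\<^sup>2 * L * R * (1/2 + \<beta> / (1 - \<beta>))"
    by (simp add: D_def power2_eq_square algebra_simps)
  ultimately show ?thesis unfolding amin_def amax_def by linarith
qed

lemma half_window_bound:
  assumes "2 \<le> T"
  shows "(1 - \<beta>) * (a1 / sqrt (real T)) * (\<Sum>n\<in>{T div 2..<T}. q n)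
    \<le> (hi - lo) + 2 * a2\<^sup>2 * L * R * (1/2 + \<beta> / (1 - \<beta>)) + a2 * P / (1 - \<beta>)"
proof -
  define A where "A = T div 2"
  have "0 < A" "A \<le> T" "T - A \<le> 2 * A" using assms unfolding A_def by linarith+
  then have A: "0 < A" "A \<le> T" "real (T - A) \<le> 2 * real A"
    using of_nat_mono[of "T - A" "2 * A"] by simp_all
  have "real (T - A) * (a2 / sqrt (real A))\<^sup>2 = real (T - A) / real A * a2\<^sup>2"
    using A by (simp add: power_divide)
  also have "\<dots> \<le> 2 * a2\<^sup>2"
    using A by (intro mult_right_mono) (auto simp: divide_le_eq)
  finally have "real (T - A) * (a2 / sqrt (real A))\<^sup>2 * (L * R * (1/2 + \<beta> / (1 - \<beta>)))
      \<le> 2 * a2\<^sup>2 * (L * R * (1/2 + \<beta> / (1 - \<beta>)))"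
    using \<beta> L R by (intro mult_right_mono) auto
  moreover have "a2 / sqrt (real A) * P / (1 - \<beta>) \<le> a2 * P / (1 - \<beta>)"
    using A \<beta> P_nonneg a2_pos by (intro divide_right_mono mult_right_mono) (auto simp: divide_le_eq)
  ultimately show ?thesis
    using window_bound[OF A(1,2)] unfolding A_def by (simp add: mult.assoc)
qed

text \<open>On T/2 \<le> n < T all step sizes are comparable to 1 / sqrt T, which avoids the log T
  lost by summing from 0; the smallest q n there is at most the window average.\<close>
lemma window_rate: "\<exists>C. \<forall>T \<ge> 2. \<exists>n\<in>{T div 2..<T}. q n \<le> C / sqrt (real T)"
proof (intro exI allI impI)
  define C0 where "C0 = (hi - lo) + 2 * a2\<^sup>2 * L * R * (1/2 + \<beta> / (1 - \<beta>)) + a2 * P / (1 - \<beta>)"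
  fix T :: nat assume "2 \<le> T"
  define m where "m = T - T div 2"
  have T: "T div 2 < T" "real T \<le> 2 * real m" "card {T div 2..<T} = m"
    using \<open>2 \<le> T\<close> of_nat_mono[of T "2 * m"] by (simp_all add: m_def)
  define c where "c = (1 - \<beta>) * (a1 / sqrt (real T))"
  have c: "0 < c" using \<beta> a1 T by (simp add: c_def)
  have "c * (\<Sum>n\<in>{T div 2..<T}. q n) \<le> C0"
    using half_window_bound[OF \<open>2 \<le> T\<close>] unfolding c_def C0_def .
  then have "(\<Sum>n\<in>{T div 2..<T}. q n) \<le> C0 / c"
    by (subst pos_le_divide_eq[OF c]) (simp add: mult.commute)
  also have "C0 / c = C0 / ((1 - \<beta>) * a1) * sqrt (real T)"
    using \<beta> a1 by (simp add: c_def)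
  finally have sum_le: "(\<Sum>n\<in>{T div 2..<T}. q n) \<le> C0 / ((1 - \<beta>) * a1) * sqrt (real T)" .
  obtain n where n: "n \<in> {T div 2..<T}" "real m * q n \<le> (\<Sum>n\<in>{T div 2..<T}. q n)"
    using exists_le_mean[of "{T div 2..<T}" q] T by auto
  then have "real T * q n \<le> 2 * (\<Sum>n\<in>{T div 2..<T}. q n)"
    using mult_right_mono[OF T(2) q_nonneg[of n]] by simp
  also have "\<dots> \<le> 2 * C0 / ((1 - \<beta>) * a1) * sqrt (real T)"
    using sum_le by simp
  also have "\<dots> = real T * (2 * C0 / ((1 - \<beta>) * a1) / sqrt (real T))"
    using real_div_sqrt[of "real T"] by (metis of_nat_0_le_iff mult.commute times_divide_eq_left times_divide_eq_right)
  finally have "q n \<le> 2 * C0 / ((1 - \<beta>) * a1) / sqrt (real T)"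
    using T by (simp only: mult_le_cancel_left_pos of_nat_0_less_iff)
  then show "\<exists>n\<in>{T div 2..<T}. q n \<le> 2 * C0 / ((1 - \<beta>) * a1) / sqrt (real T)"
    using n by blast
qed

end

lemma space_gen_filtration [simp]: "space (gen_filtration M g t) = space M"
  unfolding gen_filtration_def by (simp add: space_measure_of_conv)

lemma sets_gen_filtration:
  "sets (gen_filtration M g t) = sigma_sets (space M) {g i -` B \<inter> space M | i B. i < t \<and> B \<in> sets borel}"
  unfolding gen_filtration_def by (rule sets_measure_of) auto

lemma gen_filtration_measurable:
  fixes g :: "nat \<Rightarrow> 'a \<Rightarrow> real^'d"
  assumes "i < t"
  shows "g i \<in> borel_measurable (gen_filtration M g t)"
proof (rule measurableI)
  fix B :: "(real^'d) set" assume "B \<in> sets borel"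
  then show "g i -` B \<inter> space (gen_filtration M g t) \<in> sets (gen_filtration M g t)"
    using assms unfolding sets_gen_filtration by (intro sigma_sets.Basic) auto
qed simp

lemma (in prob_space) sigma_finite_subalgebra_gen_filtration:
  fixes g :: "nat \<Rightarrow> 'a \<Rightarrow> real^'d"
  assumes "\<And>i. g i \<in> borel_measurable M"
  shows "sigma_finite_subalgebra M (gen_filtration M g t)"
proof -
  have "subalgebra M (gen_filtration M g t)"
    unfolding subalgebra_def sets_gen_filtration
    using assms by (auto intro!: sets.sigma_sets_subset intro: measurable_sets)
  then show ?thesis
    by (intro finite_measure_subalgebra_is_sigma_finite)
       (simp add: finite_measure_subalgebra_def finite_measure_subalgebra_axioms_def finite_measure_axioms)
qed

lemma (in sigma_finite_subalgebra) integral_mult_real_cond_exp: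
  assumes "integrable M (\<lambda>x. h x * Y x)"
    and h: "h \<in> borel_measurable F" and [measurable]: "Y \<in> borel_measurable M" "Z \<in> borel_measurable M"
    and cond_exp: "AE x in M. real_cond_exp M F Y x = Z x"
  shows "(\<integral>x. h x * Y x \<partial>M) = (\<integral>x. h x * Z x \<partial>M)"
proof -
  have [measurable]: "h \<in> borel_measurable M" by (rule measurable_from_subalg[OF subalg h])
  have "(\<integral>x. h x * Y x \<partial>M) = (\<integral>x. h x * real_cond_exp M F Y x \<partial>M)"
    using real_cond_exp_intg(2)[OF assms(1-3)] by simp
  also have "\<dots> = (\<integral>x. h x * Z x \<partial>M)"
    using cond_exp by (intro integral_cong_AE) auto
  finally show ?thesis .
qed

lemma (in prob_space) ema_integrable_bound:
  fixes X Y :: "nat \<Rightarrow> 'a \<Rightarrow> real"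
  assumes \<beta>: "0 \<le> \<beta>" "\<beta> \<le> 1"
    and X_meas: "\<And>n. X n \<in> borel_measurable M"
    and X_nonneg: "\<And>n x. 0 \<le> X n x"
    and X_0: "\<And>x. X 0 x \<le> Y 0 x"
    and X_Suc: "\<And>n x. X (Suc n) x \<le> \<beta> * X n x + (1 - \<beta>) * Y (Suc n) x"
    and Y_int: "\<And>n. integrable M (Y n)"
    and Y_bound: "\<And>n. (\<integral>x. Y n x \<partial>M) \<le> c"
  shows "integrable M (X n) \<and> (\<integral>x. X n x \<partial>M) \<le> c"
proof (induction n)
  case 0
  have "integrable M (X 0)"
    using X_nonneg X_0 by (intro Bochner_Integration.integrable_bound[OF Y_int[of 0] X_meas])
      (auto intro!: AE_I2 intro: order_trans[OF _ abs_ge_self])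
  moreover have "(\<integral>x. X 0 x \<partial>M) \<le> (\<integral>x. Y 0 x \<partial>M)"
    using calculation X_0 Y_int by (intro integral_mono)
  ultimately show ?case using Y_bound[of 0] by simp
next
  case (Suc n)
  define Z where "Z = (\<lambda>x. \<beta> * X n x + (1 - \<beta>) * Y (Suc n) x)"
  have Z_int: "integrable M Z" using Suc.IH Y_int by (simp add: Z_def)
  have "\<bar>X (Suc n) x\<bar> \<le> \<bar>Z x\<bar>" for x
    using X_nonneg[of "Suc n" x] X_Suc[of n x] by (simp add: Z_def)
  then have "integrable M (X (Suc n))"
    by (intro Bochner_Integration.integrable_bound[OF Z_int X_meas]) auto
  moreover have "(\<integral>x. X (Suc n) x \<partial>M) \<le> (\<integral>x. Z x \<partial>M)"
    using calculation Z_int X_Suc by (intro integral_mono) (auto simp: Z_def)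
  moreover have "(\<integral>x. Z x \<partial>M) \<le> \<beta> * c + (1 - \<beta>) * c"
    using Suc.IH Y_int Y_bound[of "Suc n"] \<beta>
    by (simp add: Z_def) (intro add_mono mult_left_mono; simp)
  ultimately show ?case by (simp add: algebra_simps)
qed

lemma norm_le_one_plus_square: "norm x \<le> 1 + (norm x)\<^sup>2"
proof -
  have "2 * norm x \<le> (norm x)\<^sup>2 + 1"
    using sum_squares_bound[of "norm x" 1] by simp
  then show ?thesis using norm_ge_zero[of x] zero_le_power2[of "norm x"] by linarith
qed

lemma (in prob_space) integrable_inner_bounded:
  fixes a b :: "'a \<Rightarrow> 'v::euclidean_space"
  assumes [measurable]: "a \<in> borel_measurable M" "b \<in> borel_measurable M"
    and a_bound: "\<And>x. norm (a x) \<le> B"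
    and b_sq: "integrable M (\<lambda>x. (norm (b x))\<^sup>2)"
  shows "integrable M (\<lambda>x. a x \<bullet> b x)"
    and "\<bar>\<integral>x. a x \<bullet> b x \<partial>M\<bar> \<le> B * (1 + (\<integral>x. (norm (b x))\<^sup>2 \<partial>M))"
proof -
  have B: "0 \<le> B" using a_bound[of undefined] norm_ge_zero order_trans by blast
  have pointwise: "\<bar>a x \<bullet> b x\<bar> \<le> B * (1 + (norm (b x))\<^sup>2)" for x
  proof -
    have "\<bar>a x \<bullet> b x\<bar> \<le> norm (a x) * norm (b x)" by (rule Cauchy_Schwarz_ineq2)
    also have "\<dots> \<le> B * (1 + (norm (b x))\<^sup>2)"
      using a_bound[of x] norm_le_one_plus_square[of "b x"] B by (intro mult_mono) auto
    finally show ?thesis .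
  qed
  have bound_int: "integrable M (\<lambda>x. B * (1 + (norm (b x))\<^sup>2))" using b_sq by simp
  show int: "integrable M (\<lambda>x. a x \<bullet> b x)"
    using pointwise B by (intro Bochner_Integration.integrable_bound[OF bound_int]) auto
  have "\<bar>\<integral>x. a x \<bullet> b x \<partial>M\<bar> \<le> (\<integral>x. \<bar>a x \<bullet> b x\<bar> \<partial>M)" by (rule integral_abs_bound)
  also have "\<dots> \<le> (\<integral>x. B * (1 + (norm (b x))\<^sup>2) \<partial>M)"
    using int bound_int pointwise by (intro integral_mono) auto
  also have "\<dots> = B * (1 + (\<integral>x. (norm (b x))\<^sup>2 \<partial>M))"
    using b_sq by (simp add: prob_space)
  finally show "\<bar>\<integral>x. a x \<bullet> b x \<partial>M\<bar> \<le> B * (1 + (\<integral>x. (norm (b x))\<^sup>2 \<partial>M))" .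
qed

definition adopt_v ::
  "real \<Rightarrow> real \<Rightarrow> real \<Rightarrow> (nat \<Rightarrow> real) \<Rightarrow> real^'d \<Rightarrow> (nat \<Rightarrow> real^'d) \<Rightarrow> nat \<Rightarrow> real^'d" where
  "adopt_v beta1 beta2 eps alpha theta0 gs n = fst (snd (adopt_state beta1 beta2 eps alpha theta0 gs n))"

text \<open>Index shift: adopt_m n is the paper's m_(n+1), the direction of the step from theta_n
  to theta_(n+1).\<close>
definition adopt_m ::
  "real \<Rightarrow> real \<Rightarrow> real \<Rightarrow> (nat \<Rightarrow> real) \<Rightarrow> real^'d \<Rightarrow> (nat \<Rightarrow> real^'d) \<Rightarrow> nat \<Rightarrow> real^'d" where
  "adopt_m beta1 beta2 eps alpha theta0 gs n = snd (snd (adopt_state beta1 beta2 eps alpha theta0 gs n))"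

lemma adopt_theta_0 [simp]: "adopt_theta b1 b2 e al t0 gs 0 = t0"
  by (simp add: adopt_theta_def Let_def)

lemma adopt_v_0 [simp]: "adopt_v b1 b2 e al t0 gs 0 = (\<chi> i. gs 0 $ i * gs 0 $ i)"
  by (simp add: adopt_v_def Let_def)

lemma adopt_m_0 [simp]: "adopt_m b1 b2 e al t0 gs 0 = emax_sqrt_div e (gs 1) (adopt_v b1 b2 e al t0 gs 0)"
  by (simp add: adopt_m_def adopt_v_def Let_def)

lemma adopt_theta_Suc [simp]:
  "adopt_theta b1 b2 e al t0 gs (Suc n) = adopt_theta b1 b2 e al t0 gs n - al (Suc n) *\<^sub>R adopt_m b1 b2 e al t0 gs n"
  by (simp add: adopt_theta_def adopt_m_def Let_def split: prod.split)

lemma adopt_v_Suc [simp]: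
  "adopt_v b1 b2 e al t0 gs (Suc n) =
    (\<chi> i. b2 * adopt_v b1 b2 e al t0 gs n $ i + (1 - b2) * (gs (Suc n) $ i * gs (Suc n) $ i))"
  by (simp add: adopt_v_def Let_def split: prod.split)

lemma adopt_m_Suc [simp]:
  "adopt_m b1 b2 e al t0 gs (Suc n) = b1 *\<^sub>R adopt_m b1 b2 e al t0 gs n
    + (1 - b1) *\<^sub>R emax_sqrt_div e (gs (Suc (Suc n))) (adopt_v b1 b2 e al t0 gs (Suc n))"
  by (simp add: adopt_m_def adopt_v_def Let_def split: prod.split)

lemma measurable_adopt_v:
  fixes g :: "nat \<Rightarrow> 'a \<Rightarrow> real^'d"
  assumes "\<And>i. i \<le> n \<Longrightarrow> g i \<in> borel_measurable N"
  shows "(\<lambda>x. adopt_v b1 b2 e al t0 (\<lambda>s. g s x) n) \<in> borel_measurable N"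
  using assms
proof (induction n)
  case 0
  then have [measurable]: "g 0 \<in> borel_measurable N" by simp
  show ?case by (simp, intro borel_measurable_vec_componentwise) simp
next
  case (Suc n)
  then have [measurable]: "g (Suc n) \<in> borel_measurable N"
    "(\<lambda>x. adopt_v b1 b2 e al t0 (\<lambda>s. g s x) n) \<in> borel_measurable N" by simp_all
  show ?case by (simp, intro borel_measurable_vec_componentwise) simp
qed

lemma measurable_adopt_m_theta:
  fixes g :: "nat \<Rightarrow> 'a \<Rightarrow> real^'d"
  assumes "\<And>i. i \<le> Suc n \<Longrightarrow> g i \<in> borel_measurable N"
  shows "(\<lambda>x. adopt_m b1 b2 e al t0 (\<lambda>s. g s x) n) \<in> borel_measurable N
    \<and> (\<lambda>x. adopt_theta b1 b2 e al t0 (\<lambda>s. g s x) (Suc n)) \<in> borel_measurable N"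
  using assms
proof (induction n)
  case 0
  have [measurable]: "g 1 \<in> borel_measurable N" using 0 by simp
  have [measurable]: "(\<lambda>x. adopt_v b1 b2 e al t0 (\<lambda>s. g s x) 0) \<in> borel_measurable N"
    using 0 by (intro measurable_adopt_v) auto
  have "(\<lambda>x. adopt_m b1 b2 e al t0 (\<lambda>s. g s x) 0) \<in> borel_measurable N"
    by (subst adopt_m_0) measurable
  then show ?case by simp
next
  case (Suc n)
  then have [measurable]: "g (Suc (Suc n)) \<in> borel_measurable N"
    "(\<lambda>x. adopt_m b1 b2 e al t0 (\<lambda>s. g s x) n) \<in> borel_measurable N"
    "(\<lambda>x. adopt_theta b1 b2 e al t0 (\<lambda>s. g s x) (Suc n)) \<in> borel_measurable N"
    by simp_all
  have [measurable]: "(\<lambda>x. adopt_v b1 b2 e al t0 (\<lambda>s. g s x) (Suc n)) \<in> borel_measurable N"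
    using Suc.prems by (intro measurable_adopt_v) auto
  have m [measurable]: "(\<lambda>x. adopt_m b1 b2 e al t0 (\<lambda>s. g s x) (Suc n)) \<in> borel_measurable N"
    by (subst adopt_m_Suc) measurable
  have "(\<lambda>x. adopt_theta b1 b2 e al t0 (\<lambda>s. g s x) (Suc (Suc n))) \<in> borel_measurable N"
    by (subst adopt_theta_Suc) measurable
  with m show ?case by blast
qed

lemma measurable_adopt_theta:
  fixes g :: "nat \<Rightarrow> 'a \<Rightarrow> real^'d"
  assumes "\<And>i. i \<le> n \<Longrightarrow> g i \<in> borel_measurable N"
  shows "(\<lambda>x. adopt_theta b1 b2 e al t0 (\<lambda>s. g s x) n) \<in> borel_measurable N"
proof (cases n)
  case (Suc k)
  then show ?thesis using measurable_adopt_m_theta[of k g] assms by blast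
qed simp

locale adopt_setting = prob_space M for M :: "'a measure" +
  fixes f :: "real^'d \<Rightarrow> real" and df :: "real^'d \<Rightarrow> real^'d"
    and L f_inf f_sup beta1 beta2 eps a1 a2 G :: real
    and alpha :: "nat \<Rightarrow> real" and theta0 :: "real^'d"
    and g :: "nat \<Rightarrow> 'a \<Rightarrow> real^'d"
  assumes grad: "\<And>x. GDERIV f x :> df x"
    and L_pos: "L > 0"
    and smooth: "\<And>x y. norm (df x - df y) \<le> L * norm (x - y)"
    and bounded: "\<And>x. f_inf \<le> f x \<and> f x \<le> f_sup"
    and beta1: "0 \<le> beta1" "beta1 < 1"
    and beta2: "0 \<le> beta2" "beta2 < 1"
    and eps: "eps > 0"
    and a1: "0 < a1"
    and lr: "\<And>t. t \<ge> 1 \<Longrightarrow> a1 / sqrt (real t) \<le> alpha t \<and> alpha t \<le> a2 / sqrt (real t)"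
    and g_meas: "\<And>t. g t \<in> borel_measurable M"
    and g_moment: "\<And>t. (\<integral>\<^sup>+ x. ennreal ((norm (g t x))\<^sup>2) \<partial>M) \<le> ennreal (G\<^sup>2)"
    and g_unbiased: "\<And>t i. t \<ge> 1 \<Longrightarrow>
        AE x in M. real_cond_exp M (gen_filtration M g t) (\<lambda>y. g t y $ i) x
          = df (adopt_theta beta1 beta2 eps alpha theta0 (\<lambda>s. g s x) (t - 1)) $ i"
begin

abbreviation theta :: "nat \<Rightarrow> 'a \<Rightarrow> real^'d" where
  "theta n x \<equiv> adopt_theta beta1 beta2 eps alpha theta0 (\<lambda>s. g s x) n"

abbreviation sq_avg :: "nat \<Rightarrow> 'a \<Rightarrow> real^'d" where
  "sq_avg n x \<equiv> adopt_v beta1 beta2 eps alpha theta0 (\<lambda>s. g s x) n"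

abbreviation momentum :: "nat \<Rightarrow> 'a \<Rightarrow> real^'d" where
  "momentum n x \<equiv> adopt_m beta1 beta2 eps alpha theta0 (\<lambda>s. g s x) n"

declare g_meas [measurable]

definition grad_bound :: real where
  "grad_bound = sqrt (2 * L * (f_sup - f_inf))"

definition precond_grad :: "nat \<Rightarrow> 'a \<Rightarrow> real^'d" where
  "precond_grad n x = emax_sqrt_div eps (df (theta n x)) (sq_avg n x)"

definition mean_loss :: "nat \<Rightarrow> real" where
  "mean_loss n = (\<integral>x. f (theta n x) \<partial>M)"

definition mean_grad_momentum :: "nat \<Rightarrow> real" where
  "mean_grad_momentum n = (\<integral>x. df (theta n x) \<bullet> momentum n x \<partial>M)"

definition mean_precond_grad_sq :: "nat \<Rightarrow> real" where
  "mean_precond_grad_sq n = (\<integral>x. precond_grad n x \<bullet> df (theta n x) \<partial>M)"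

definition mean_momentum_sq :: "nat \<Rightarrow> real" where
  "mean_momentum_sq n = (\<integral>x. (norm (momentum n x))\<^sup>2 \<partial>M)"

lemma norm_df_le: "norm (df x) \<le> grad_bound"
  unfolding grad_bound_def by (rule smooth_bounded_gradient_bound[OF grad smooth L_pos bounded])

lemma alpha_nonneg: "0 \<le> alpha (Suc n)"
proof -
  have "0 \<le> a1 / sqrt (real (Suc n))" using a1 by simp
  then show ?thesis using lr[of "Suc n"] by linarith
qed

lemma df_measurable [measurable]: "df \<in> borel_measurable borel"
proof (rule borel_measurable_continuous_onI, rule lipschitz_on_continuous_on)
  show "L-lipschitz_on UNIV df"
    using L_pos smooth by (auto simp: lipschitz_on_def dist_norm)
qed

lemma f_measurable [measurable]: "f \<in> borel_measurable borel"
proof (intro borel_measurable_continuous_onI continuous_at_imp_continuous_on ballI)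
  show "isCont f x" for x
    using grad[of x] unfolding gderiv_def by (rule has_derivative_continuous)
qed

lemma measurable_theta [measurable]: "(\<lambda>x. theta n x) \<in> borel_measurable M"
  by (rule measurable_adopt_theta) (rule g_meas)

lemma measurable_sq_avg [measurable]: "(\<lambda>x. sq_avg n x) \<in> borel_measurable M"
  by (rule measurable_adopt_v) (rule g_meas)

lemma measurable_momentum [measurable]: "(\<lambda>x. momentum n x) \<in> borel_measurable M"
  using measurable_adopt_m_theta[of n g] g_meas by blast

lemma theta_sq_avg_filtration_measurable:
  "(\<lambda>x. theta n x) \<in> borel_measurable (gen_filtration M g (Suc n))"
  "(\<lambda>x. sq_avg n x) \<in> borel_measurable (gen_filtration M g (Suc n))"
  using gen_filtration_measurable[of _ "Suc n" g M]
  by (auto intro!: measurable_adopt_theta measurable_adopt_v)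

lemma sample_sq_integrable: "integrable M (\<lambda>x. (norm (g t x))\<^sup>2)"
proof (rule integrableI_nonneg)
  show "(\<lambda>x. (norm (g t x))\<^sup>2) \<in> borel_measurable M" by measurable
  show "(\<integral>\<^sup>+ x. ennreal ((norm (g t x))\<^sup>2) \<partial>M) < \<infinity>"
    using g_moment[of t] by (simp add: order_le_less_trans)
qed auto

lemma sample_sq_bound: "(\<integral>x. (norm (g t x))\<^sup>2 \<partial>M) \<le> G\<^sup>2"
proof -
  have "ennreal (\<integral>x. (norm (g t x))\<^sup>2 \<partial>M) = (\<integral>\<^sup>+ x. ennreal ((norm (g t x))\<^sup>2) \<partial>M)"
    by (rule nn_integral_eq_integral[OF sample_sq_integrable, symmetric]) auto
  also have "\<dots> \<le> ennreal (G\<^sup>2)" by (rule g_moment)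
  finally show ?thesis by (simp add: ennreal_le_iff)
qed

lemma grad_bound_nonneg: "0 \<le> grad_bound"
  using norm_df_le[of 0] norm_ge_zero[of "df 0"] by linarith

lemma sq_avg_nonneg: "0 \<le> sq_avg n x $ i"
  using beta2 by (induction n) simp_all

lemma sq_avg_trace_bound:
  "integrable M (\<lambda>x. sum (($) (sq_avg n x)) UNIV) \<and> (\<integral>x. sum (($) (sq_avg n x)) UNIV \<partial>M) \<le> G\<^sup>2"
proof (rule ema_integrable_bound[where X = "\<lambda>n x. sum (($) (sq_avg n x)) UNIV" and Y = "\<lambda>n x. (norm (g n x))\<^sup>2"])
  show "sum (($) (sq_avg (Suc n) x)) UNIV
      \<le> beta2 * sum (($) (sq_avg n x)) UNIV + (1 - beta2) * (norm (g (Suc n) x))\<^sup>2" for n x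
    unfolding norm_sq_vec_sum by (simp add: sum.distrib power2_eq_square flip: sum_distrib_left)
  show "sum (($) (sq_avg 0 x)) UNIV \<le> (norm (g 0 x))\<^sup>2" for x
    unfolding norm_sq_vec_sum by (simp add: power2_eq_square)
qed (use beta2 sq_avg_nonneg sample_sq_integrable sample_sq_bound in \<open>auto intro!: sum_nonneg\<close>)

lemma scaled_sample_sq_bound:
  "integrable M (\<lambda>x. (norm (emax_sqrt_div eps (g (Suc n) x) (sq_avg n x)))\<^sup>2)
   \<and> (\<integral>x. (norm (emax_sqrt_div eps (g (Suc n) x) (sq_avg n x)))\<^sup>2 \<partial>M) \<le> G\<^sup>2 / eps\<^sup>2"
proof
  have pointwise: "(norm (emax_sqrt_div eps (g (Suc n) x) (sq_avg n x)))\<^sup>2 \<le> (norm (g (Suc n) x))\<^sup>2 / eps\<^sup>2" for x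
  proof -
    have "(norm (emax_sqrt_div eps (g (Suc n) x) (sq_avg n x)))\<^sup>2 \<le> (norm (g (Suc n) x) / eps)\<^sup>2"
      using norm_emax_sqrt_div_le[OF eps] by (rule power_mono) simp
    then show ?thesis by (simp add: power_divide)
  qed
  have bound_int: "integrable M (\<lambda>x. (norm (g (Suc n) x))\<^sup>2 / eps\<^sup>2)"
    using sample_sq_integrable by simp
  show int: "integrable M (\<lambda>x. (norm (emax_sqrt_div eps (g (Suc n) x) (sq_avg n x)))\<^sup>2)"
    using pointwise by (intro Bochner_Integration.integrable_bound[OF bound_int]) auto
  have "(\<integral>x. (norm (emax_sqrt_div eps (g (Suc n) x) (sq_avg n x)))\<^sup>2 \<partial>M)
      \<le> (\<integral>x. (norm (g (Suc n) x))\<^sup>2 / eps\<^sup>2 \<partial>M)"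
    using int bound_int pointwise by (intro integral_mono)
  also have "\<dots> \<le> G\<^sup>2 / eps\<^sup>2"
    using sample_sq_bound by (simp add: divide_right_mono)
  finally show "(\<integral>x. (norm (emax_sqrt_div eps (g (Suc n) x) (sq_avg n x)))\<^sup>2 \<partial>M) \<le> G\<^sup>2 / eps\<^sup>2" .
qed

lemma momentum_sq_bound:
  "integrable M (\<lambda>x. (norm (momentum n x))\<^sup>2) \<and> mean_momentum_sq n \<le> G\<^sup>2 / eps\<^sup>2"
  unfolding mean_momentum_sq_def
proof (rule ema_integrable_bound[where X = "\<lambda>n x. (norm (momentum n x))\<^sup>2"
      and Y = "\<lambda>n x. (norm (emax_sqrt_div eps (g (Suc n) x) (sq_avg n x)))\<^sup>2"])
  show "(norm (momentum (Suc n) x))\<^sup>2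
      \<le> beta1 * (norm (momentum n x))\<^sup>2 + (1 - beta1) * (norm (emax_sqrt_div eps (g (Suc (Suc n)) x) (sq_avg (Suc n) x)))\<^sup>2"
    for n x
    using beta1 by (simp only: adopt_m_Suc) (intro norm_convex_comb_sq_le; simp)
qed (use beta1 scaled_sample_sq_bound in auto)

lemma mean_grad_momentum_bound:
  "integrable M (\<lambda>x. df (theta n x) \<bullet> momentum n x)
   \<and> \<bar>mean_grad_momentum n\<bar> \<le> grad_bound * (1 + G\<^sup>2 / eps\<^sup>2)"
proof
  show "integrable M (\<lambda>x. df (theta n x) \<bullet> momentum n x)"
    using momentum_sq_bound norm_df_le by (intro integrable_inner_bounded) auto
  have "\<bar>mean_grad_momentum n\<bar> \<le> grad_bound * (1 + mean_momentum_sq n)"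
    unfolding mean_grad_momentum_def mean_momentum_sq_def
    using momentum_sq_bound norm_df_le by (intro integrable_inner_bounded) auto
  also have "\<dots> \<le> grad_bound * (1 + G\<^sup>2 / eps\<^sup>2)"
    using momentum_sq_bound grad_bound_nonneg by (intro mult_left_mono) auto
  finally show "\<bar>mean_grad_momentum n\<bar> \<le> grad_bound * (1 + G\<^sup>2 / eps\<^sup>2)" .
qed

lemma precond_grad_measurable [measurable]:
  "(\<lambda>x. precond_grad n x) \<in> borel_measurable (gen_filtration M g (Suc n))"
  "(\<lambda>x. precond_grad n x) \<in> borel_measurable M"
  using theta_sq_avg_filtration_measurable by (simp_all add: precond_grad_def)

lemma norm_precond_grad_le: "norm (precond_grad n x) \<le> grad_bound / eps"
  using norm_emax_sqrt_div_le[OF eps] norm_df_le eps unfolding precond_grad_def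
  by (meson divide_right_mono less_imp_le order_trans)

lemma precond_grad_sq_nonneg: "0 \<le> precond_grad n x \<bullet> df (theta n x)"
proof -
  have "0 \<le> (norm (df (theta n x)))\<^sup>2 / sqrt (sum (($) (sq_avg n x)) UNIV + eps\<^sup>2)"
    using sq_avg_nonneg by (auto intro!: divide_nonneg_nonneg add_nonneg_nonneg sum_nonneg)
  also have "\<dots> \<le> precond_grad n x \<bullet> df (theta n x)"
    unfolding precond_grad_def inner_commute[of _ "df _"]
    by (rule inner_emax_sqrt_div_self_lower[OF eps sq_avg_nonneg])
  finally show ?thesis .
qed

lemma precond_grad_sq_integrable: "integrable M (\<lambda>x. precond_grad n x \<bullet> df (theta n x))"
proof (rule integrable_const_bound[where B = "grad_bound / eps * grad_bound"])
  have "norm (precond_grad n x \<bullet> df (theta n x)) \<le> norm (precond_grad n x) * norm (df (theta n x))" for x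
    using Cauchy_Schwarz_ineq2 by simp
  also have "\<dots> x \<le> grad_bound / eps * grad_bound" for x
    using norm_precond_grad_le norm_df_le grad_bound_nonneg eps by (intro mult_mono) auto
  finally show "AE x in M. norm (precond_grad n x \<bullet> df (theta n x)) \<le> grad_bound / eps * grad_bound"
    by simp
qed simp

lemma precond_grad_component_integrable:
  "integrable M (\<lambda>x. precond_grad n x $ i * g (Suc n) x $ i)"
  "integrable M (\<lambda>x. precond_grad n x $ i * df (theta n x) $ i)"
proof -
  have "(norm (g (Suc n) x $ i))\<^sup>2 \<le> (norm (g (Suc n) x))\<^sup>2" for x
    using component_le_norm_cart[of "g (Suc n) x" i]
      abs_le_square_iff[of "g (Suc n) x $ i" "norm (g (Suc n) x)"] by simp
  then have sample_i_sq: "integrable M (\<lambda>x. (norm (g (Suc n) x $ i))\<^sup>2)"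
    by (intro Bochner_Integration.integrable_bound[OF sample_sq_integrable[of "Suc n"]]) auto
  have precond_i: "norm (precond_grad n x $ i) \<le> grad_bound / eps" for x
    using component_le_norm_cart[of "precond_grad n x" i] norm_precond_grad_le[of n x] by simp
  have df_i: "norm (df (theta n x) $ i) \<le> grad_bound" for x
    using component_le_norm_cart[of "df (theta n x)" i] norm_df_le[of "theta n x"] by simp
  show "integrable M (\<lambda>x. precond_grad n x $ i * g (Suc n) x $ i)"
    using integrable_inner_bounded(1)[of "\<lambda>x. precond_grad n x $ i" "\<lambda>x. g (Suc n) x $ i",
        OF _ _ precond_i sample_i_sq]
    by simp
  show "integrable M (\<lambda>x. precond_grad n x $ i * df (theta n x) $ i)"
  proof (rule integrable_const_bound[where B = "grad_bound / eps * grad_bound"])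
    have "norm (precond_grad n x $ i) * norm (df (theta n x) $ i) \<le> grad_bound / eps * grad_bound" for x
      using precond_i df_i grad_bound_nonneg eps by (intro mult_mono) auto
    then show "AE x in M. norm (precond_grad n x $ i * df (theta n x) $ i) \<le> grad_bound / eps * grad_bound"
      by (simp add: abs_mult)
  qed simp
qed

text \<open>precond_grad n depends only on g 0, ..., g n, so conditioning on these replaces the
  fresh sample g (Suc n) by the true gradient.\<close>
lemma scaled_sample_expectation:
  "integrable M (\<lambda>x. df (theta n x) \<bullet> emax_sqrt_div eps (g (Suc n) x) (sq_avg n x))
   \<and> (\<integral>x. df (theta n x) \<bullet> emax_sqrt_div eps (g (Suc n) x) (sq_avg n x) \<partial>M) = mean_precond_grad_sq n"
proof -
  interpret filt: sigma_finite_subalgebra M "gen_filtration M g (Suc n)"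
    by (rule sigma_finite_subalgebra_gen_filtration[OF g_meas])
  have "df (theta n x) \<bullet> emax_sqrt_div eps (g (Suc n) x) (sq_avg n x)
      = (\<Sum>i\<in>UNIV. precond_grad n x $ i * g (Suc n) x $ i)" for x
    unfolding precond_grad_def inner_emax_sqrt_div_commute by (simp add: inner_vec_def)
  moreover have "(\<integral>x. precond_grad n x $ i * g (Suc n) x $ i \<partial>M)
      = (\<integral>x. precond_grad n x $ i * df (theta n x) $ i \<partial>M)" for i
    using g_unbiased[of "Suc n" i] precond_grad_component_integrable
    by (intro filt.integral_mult_real_cond_exp) auto
  ultimately show ?thesis
    using precond_grad_component_integrable
    by (simp add: mean_precond_grad_sq_def inner_vec_def Bochner_Integration.integral_sum)
qed

lemma loss_integrable: "integrable M (\<lambda>x. f (theta n x))"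
proof (rule integrable_const_bound[where B = "\<bar>f_inf\<bar> + \<bar>f_sup\<bar>"])
  have "norm (f y) \<le> \<bar>f_inf\<bar> + \<bar>f_sup\<bar>" for y
    using bounded[of y] by (simp add: abs_le_iff) linarith
  then show "AE x in M. norm (f (theta n x)) \<le> \<bar>f_inf\<bar> + \<bar>f_sup\<bar>" by simp
qed simp

lemma mean_loss_bounds: "f_inf \<le> mean_loss n \<and> mean_loss n \<le> f_sup"
proof
  have "(\<integral>x. f_inf \<partial>M) \<le> mean_loss n" unfolding mean_loss_def
    using bounded by (intro integral_mono loss_integrable) auto
  then show "f_inf \<le> mean_loss n" by (simp add: prob_space)
  have "mean_loss n \<le> (\<integral>x. f_sup \<partial>M)" unfolding mean_loss_def
    using bounded by (intro integral_mono loss_integrable) auto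
  then show "mean_loss n \<le> f_sup" by (simp add: prob_space)
qed

lemma mean_descent:
  "mean_loss (Suc n) \<le> mean_loss n - alpha (Suc n) * mean_grad_momentum n
     + L / 2 * (alpha (Suc n))\<^sup>2 * mean_momentum_sq n"
proof -
  have pointwise: "f (theta (Suc n) x) \<le> f (theta n x) - alpha (Suc n) * (df (theta n x) \<bullet> momentum n x)
      + L / 2 * (alpha (Suc n))\<^sup>2 * (norm (momentum n x))\<^sup>2" for x
    using smooth_quadratic_upper_bound[OF grad smooth, of "theta (Suc n) x" "theta n x"]
    by (simp add: power_mult_distrib)
  have "mean_loss (Suc n) \<le> (\<integral>x. f (theta n x) - alpha (Suc n) * (df (theta n x) \<bullet> momentum n x)
      + L / 2 * (alpha (Suc n))\<^sup>2 * (norm (momentum n x))\<^sup>2 \<partial>M)"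
    unfolding mean_loss_def using loss_integrable[of "Suc n"] loss_integrable[of n]
      mean_grad_momentum_bound momentum_sq_bound pointwise
    by (intro integral_mono) auto
  also have "\<dots> = mean_loss n - alpha (Suc n) * mean_grad_momentum n + L / 2 * (alpha (Suc n))\<^sup>2 * mean_momentum_sq n"
    unfolding mean_loss_def mean_grad_momentum_def mean_momentum_sq_def
    using loss_integrable mean_grad_momentum_bound momentum_sq_bound by simp
  finally show ?thesis .
qed

lemma mean_momentum_recursion:
  "beta1 * mean_grad_momentum n - beta1 * L * alpha (Suc n) * mean_momentum_sq n
     + (1 - beta1) * mean_precond_grad_sq (Suc n) \<le> mean_grad_momentum (Suc n)"
proof -
  define sample where "sample x = df (theta (Suc n) x) \<bullet> emax_sqrt_div eps (g (Suc (Suc n)) x) (sq_avg (Suc n) x)" for x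
  have pointwise: "beta1 * (df (theta n x) \<bullet> momentum n x) - beta1 * L * alpha (Suc n) * (norm (momentum n x))\<^sup>2
      + (1 - beta1) * sample x \<le> df (theta (Suc n) x) \<bullet> momentum (Suc n) x" for x
  proof -
    have "df (theta n x) \<bullet> momentum n x - L * alpha (Suc n) * (norm (momentum n x))\<^sup>2
        \<le> df (theta (Suc n) x) \<bullet> momentum n x"
      using lipschitz_gradient_inner_step[OF smooth alpha_nonneg] by simp
    then have "beta1 * (df (theta n x) \<bullet> momentum n x - L * alpha (Suc n) * (norm (momentum n x))\<^sup>2)
        \<le> beta1 * (df (theta (Suc n) x) \<bullet> momentum n x)"
      using beta1 by (intro mult_left_mono) auto
    moreover have "df (theta (Suc n) x) \<bullet> momentum (Suc n) x
        = beta1 * (df (theta (Suc n) x) \<bullet> momentum n x) + (1 - beta1) * sample x"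
      unfolding sample_def by (simp only: adopt_m_Suc inner_add_right inner_scaleR_right)
    ultimately show ?thesis by (simp add: algebra_simps)
  qed
  have "(\<integral>x. beta1 * (df (theta n x) \<bullet> momentum n x) - beta1 * L * alpha (Suc n) * (norm (momentum n x))\<^sup>2
      + (1 - beta1) * sample x \<partial>M) \<le> mean_grad_momentum (Suc n)"
    unfolding mean_grad_momentum_def sample_def
    using mean_grad_momentum_bound[of n] mean_grad_momentum_bound[of "Suc n"] momentum_sq_bound[of n]
      scaled_sample_expectation[of "Suc n"] pointwise
    by (intro integral_mono) (auto simp: sample_def)
  moreover have "(\<integral>x. beta1 * (df (theta n x) \<bullet> momentum n x) - beta1 * L * alpha (Suc n) * (norm (momentum n x))\<^sup>2
      + (1 - beta1) * sample x \<partial>M)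
    = beta1 * mean_grad_momentum n - beta1 * L * alpha (Suc n) * mean_momentum_sq n
      + (1 - beta1) * mean_precond_grad_sq (Suc n)"
    unfolding mean_grad_momentum_def mean_momentum_sq_def sample_def
    using mean_grad_momentum_bound momentum_sq_bound scaled_sample_expectation[of "Suc n"] by simp
  ultimately show ?thesis by simp
qed

lemma exists_small_mean_precond_grad_sq:
  "\<exists>C. \<forall>T \<ge> 2. \<exists>n\<in>{T div 2..<T}. mean_precond_grad_sq n \<le> C / sqrt (real T)"
proof -
  interpret scheme: momentum_scheme mean_grad_momentum mean_precond_grad_sq mean_momentum_sq mean_loss alpha
    beta1 L "G\<^sup>2 / eps\<^sup>2" "grad_bound * (1 + G\<^sup>2 / eps\<^sup>2)" f_inf f_sup a1 a2
  proof
    show "0 \<le> mean_precond_grad_sq n" for n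
      unfolding mean_precond_grad_sq_def by (intro integral_nonneg_AE AE_I2 precond_grad_sq_nonneg)
  qed (use beta1 L_pos mean_grad_momentum_bound momentum_sq_bound mean_loss_bounds mean_descent
         mean_momentum_recursion lr a1 in auto)
  show ?thesis by (rule scheme.window_rate)
qed

lemma grad_moment_integrable: "integrable M (\<lambda>x. norm (df (theta n x)) powr (4/3))"
proof (rule integrable_const_bound[where B = "grad_bound powr (4/3)"])
  show "AE x in M. norm (norm (df (theta n x)) powr (4/3)) \<le> grad_bound powr (4/3)"
    using norm_df_le by (auto intro!: AE_I2 powr_mono2)
qed simp

lemma grad_moment_young:
  assumes "0 < l"
  shows "(\<integral>x. norm (df (theta n x)) powr (4/3) \<partial>M)
    \<le> 2/3 * l * mean_precond_grad_sq n + (G\<^sup>2 + eps\<^sup>2) / (3 * l\<^sup>2)"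
proof -
  define trace where "trace = (\<lambda>x. sum (($) (sq_avg n x)) UNIV)"
  have pointwise: "norm (df (theta n x)) powr (4/3)
      \<le> 2/3 * l * (precond_grad n x \<bullet> df (theta n x)) + (trace x + eps\<^sup>2) / (3 * l\<^sup>2)" for x
  proof -
    define s where "s = sqrt (trace x + eps\<^sup>2)"
    have "0 \<le> trace x" using sq_avg_nonneg by (simp add: trace_def sum_nonneg)
    then have s: "0 < s" "s\<^sup>2 = trace x + eps\<^sup>2" using eps by (simp_all add: s_def add_nonneg_pos)
    have "(norm (df (theta n x)))\<^sup>2 / s \<le> precond_grad n x \<bullet> df (theta n x)"
      unfolding s_def trace_def precond_grad_def inner_commute[of _ "df _"]
      by (rule inner_emax_sqrt_div_self_lower[OF eps sq_avg_nonneg])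
    then have "l * (norm (df (theta n x)))\<^sup>2 / s \<le> l * (precond_grad n x \<bullet> df (theta n x))"
      using assms by (simp add: mult_left_mono flip: times_divide_eq_right)
    then have "2/3 * (l * (norm (df (theta n x)))\<^sup>2 / s) + s\<^sup>2 / (3 * l\<^sup>2)
        \<le> 2/3 * (l * (precond_grad n x \<bullet> df (theta n x))) + (trace x + eps\<^sup>2) / (3 * l\<^sup>2)"
      unfolding s(2) by simp
    then show ?thesis
      using powr_four_thirds_young[OF norm_ge_zero s(1) assms, of "df (theta n x)"] by simp
  qed
  have trace_int: "integrable M trace" and trace_le: "(\<integral>x. trace x \<partial>M) \<le> G\<^sup>2"
    using sq_avg_trace_bound[of n] by (simp_all add: trace_def)
  have "(\<integral>x. norm (df (theta n x)) powr (4/3) \<partial>M)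
      \<le> (\<integral>x. 2/3 * l * (precond_grad n x \<bullet> df (theta n x)) + (trace x + eps\<^sup>2) / (3 * l\<^sup>2) \<partial>M)"
    using grad_moment_integrable precond_grad_sq_integrable trace_int pointwise
    by (intro integral_mono) auto
  also have "\<dots> = 2/3 * l * mean_precond_grad_sq n + ((\<integral>x. trace x \<partial>M) + eps\<^sup>2) / (3 * l\<^sup>2)"
    using precond_grad_sq_integrable trace_int by (simp add: mean_precond_grad_sq_def prob_space)
  also have "\<dots> \<le> 2/3 * l * mean_precond_grad_sq n + (G\<^sup>2 + eps\<^sup>2) / (3 * l\<^sup>2)"
    using trace_le by (simp add: divide_right_mono)
  finally show ?thesis .
qed

lemma grad_moment_le: "(\<integral>x. norm (df (theta n x)) powr (4/3) \<partial>M) powr (3/2) \<le> grad_bound\<^sup>2"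
proof -
  have "(\<integral>x. norm (df (theta n x)) powr (4/3) \<partial>M) \<le> (\<integral>x. grad_bound powr (4/3) \<partial>M)"
    using grad_moment_integrable norm_df_le by (intro integral_mono powr_mono2) auto
  then have "(\<integral>x. norm (df (theta n x)) powr (4/3) \<partial>M) powr (3/2) \<le> (grad_bound powr (4/3)) powr (3/2)"
    by (intro powr_mono2) (auto simp: prob_space)
  also have "\<dots> = grad_bound\<^sup>2"
    using grad_bound_nonneg by (simp add: powr_powr flip: powr_numeral)
  finally show ?thesis .
qed


lemma grad_moment_window_rate:
  obtains K where "\<And>T. 2 \<le> T \<Longrightarrow> \<exists>n\<in>{T div 2..<T}.
    (\<integral>x. norm (df (theta n x)) powr (4/3) \<partial>M) powr (3/2) \<le> K / sqrt (real T)"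
proof -
  obtain C where C: "\<forall>T \<ge> 2. \<exists>n\<in>{T div 2..<T}. mean_precond_grad_sq n \<le> C / sqrt (real T)"
    using exists_small_mean_precond_grad_sq by blast
  show ?thesis
  proof (rule that)
    fix T :: nat assume "2 \<le> T"
    then obtain n where n: "n \<in> {T div 2..<T}" "mean_precond_grad_sq n \<le> C / sqrt (real T)"
      using C by blast
    have "(\<integral>x. norm (df (theta n x)) powr (4/3) \<partial>M) powr (3/2)
        \<le> (2/3 * C + (G\<^sup>2 + eps\<^sup>2) / 3) powr (3/2) / sqrt (real T)"
      using n(1) grad_moment_young by (intro powr_three_halves_rate[OF _ _ n(2)]) (auto intro: integral_nonneg_AE)
    then show "\<exists>n\<in>{T div 2..<T}. (\<integral>x. norm (df (theta n x)) powr (4/3) \<partial>M) powr (3/2)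
        \<le> (2/3 * C + (G\<^sup>2 + eps\<^sup>2) / 3) powr (3/2) / sqrt (real T)"
      using n(1) by blast
  qed
qed

lemma grad_moment_rate:
  obtains K where "\<And>T. 1 \<le> T \<Longrightarrow> \<exists>t\<in>{1..T}.
    (\<integral>x. norm (df (theta (t - 1) x)) powr (4/3) \<partial>M) powr (3/2) \<le> K / sqrt (real T)"
proof -
  obtain K where K: "\<And>T. 2 \<le> T \<Longrightarrow> \<exists>n\<in>{T div 2..<T}.
      (\<integral>x. norm (df (theta n x)) powr (4/3) \<partial>M) powr (3/2) \<le> K / sqrt (real T)"
    using grad_moment_window_rate by blast
  show ?thesis
  proof (rule that)
    fix T :: nat assume T: "1 \<le> T"
    show "\<exists>t\<in>{1..T}. (\<integral>x. norm (df (theta (t - 1) x)) powr (4/3) \<partial>M) powr (3/2)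
        \<le> max (grad_bound\<^sup>2) K / sqrt (real T)"
    proof (cases "T = 1")
      case True
      then show ?thesis using grad_moment_le[of 0] by auto
    next
      case False
      then have "2 \<le> T" using T by simp
      then obtain n where "n \<in> {T div 2..<T}"
        "(\<integral>x. norm (df (theta n x)) powr (4/3) \<partial>M) powr (3/2) \<le> K / sqrt (real T)"
        using K by blast
      moreover have "K / sqrt (real T) \<le> max (grad_bound\<^sup>2) K / sqrt (real T)"
        by (intro divide_right_mono) auto
      ultimately show ?thesis by (intro bexI[of _ "Suc n"]) auto
    qed
  qed
qed

end

theorem theoremE1:
  fixes M :: "'a measure"
    and f :: "real^'d \<Rightarrow> real" and df :: "real^'d \<Rightarrow> real^'d"
    and L f_inf f_sup beta1 beta2 eps a1 a2 G :: real
    and alpha :: "nat \<Rightarrow> real" and theta0 :: "real^'d"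
    and g :: "nat \<Rightarrow> 'a \<Rightarrow> real^'d"
  assumes grad: "\<And>x. GDERIV f x :> df x"
    and L_pos: "L > 0"
    and smooth: "\<And>x y. norm (df x - df y) \<le> L * norm (x - y)"
    and bounded: "\<And>x. f_inf \<le> f x \<and> f x \<le> f_sup"
    and beta1: "0 \<le> beta1" "beta1 < 1"
    and beta2: "0 \<le> beta2" "beta2 < 1"
    and eps: "eps > 0"
    and a: "0 < a1" "a1 \<le> a2"
    and lr: "\<And>t. t \<ge> 1 \<Longrightarrow> a1 / sqrt (real t) \<le> alpha t \<and> alpha t \<le> a2 / sqrt (real t)"
    and P: "prob_space M"
    and G: "G > 0"
    and g_meas: "\<And>t. g t \<in> borel_measurable M"
    and g_moment: "\<And>t. (\<integral>\<^sup>+ x. ennreal ((norm (g t x))\<^sup>2) \<partial>M) \<le> ennreal (G\<^sup>2)"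
    and g_unbiased: "\<And>t i. t \<ge> 1 \<Longrightarrow>
        AE x in M. real_cond_exp M (gen_filtration M g t) (\<lambda>y. g t y $ i) x
          = df (adopt_theta beta1 beta2 eps alpha theta0 (\<lambda>s. g s x) (t - 1)) $ i"
  shows "\<exists>K. \<forall>T::nat. T \<ge> 1 \<longrightarrow>
     Min ((\<lambda>t. (\<integral>x. (norm (df (adopt_theta beta1 beta2 eps alpha theta0 (\<lambda>s. g s x) (t - 1))))
                       powr (4/3) \<partial>M) powr (3/2)) ` {1..T})
     \<le> K / sqrt (real T)"
proof -
  interpret adopt_setting M f df L f_inf f_sup beta1 beta2 eps a1 a2 G alpha theta0 g
    by (intro adopt_setting.intro adopt_setting_axioms.intro P grad L_pos smooth bounded beta1 beta2 eps a(1) lr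
        g_meas g_moment g_unbiased)
  obtain K where "\<And>T. 1 \<le> T \<Longrightarrow> \<exists>t\<in>{1..T}.
      (\<integral>x. norm (df (theta (t - 1) x)) powr (4/3) \<partial>M) powr (3/2) \<le> K / sqrt (real T)"
    using grad_moment_rate by blast
  then show ?thesis
    by (meson Min_le atLeastAtMost_iff finite_atLeastAtMost finite_imageI image_eqI order_trans)
qed

end
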